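(* Let $n,k$ be positive integers, let $\mathbf{U} = (u_{ij}) \in \{0, 1\}^{n \times k}$ be a binary clustering matrix with $\sum_{j=1}^k u_{ij} = 1$ for every $i$, such that $\mathbf{U}^T\mathbf{U}$ is invertible, let $\sigma$ be an element-wise nonlinear function, and define $\mathbf{C} = \mathbf{U} (\mathbf{U}^T \mathbf{U})^{-1} \mathbf{U}^T \in \mathbb{R}^{n\times n}$. Then for every $\mathbf{x} \in \mathbb{R}^{n}$, \[ \sigma(\mathbf{C} \mathbf{x}) = \mathbf{C}^T \sigma( \mathbf{C} \mathbf{x}). \]
   Context: Here $\sigma:\mathbb{R}\to\mathbb{R}$ is applied coordinate-wise to vectors. The condition $\sum_j u_{ij}=1$ means every row of $\mathbf{U}$ contains exactly one entry equal to $1$; invertibility of $\mathbf{U}^T\mathbf{U}$ (a diagonal matrix of cluster sizes) means every cluster is nonempty. *)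

theory Defs
  imports "HOL-Analysis.Analysis"
begin

definition map_vec :: "(real \<Rightarrow> real) \<Rightarrow> real ^ 'n \<Rightarrow> real ^ 'n" where
  "map_vec \<sigma> v = (\<chi> i. \<sigma> (v $ i))"

end

theory Submission
  imports Defs
begin

text \<open>
  Row \<open>i\<close> of \<open>U\<close> is the standard basis vector of some cluster \<open>c i\<close>, so \<open>U\<close> merely
  copies coordinates, \<open>(U *v w) $ i = w $ c i\<close>, and hence commutes with coordinate-wise maps.
  Since \<open>C x = U w\<close> for \<open>w = (U\<^sup>T U)\<^sup>-\<^sup>1 U\<^sup>T x\<close>, we get \<open>\<sigma>(C x) = U \<sigma>(w)\<close>, and the
  claim follows from \<open>C\<^sup>T U = U\<close>: \<open>C\<close> is the orthogonal projection onto the column space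
  of \<open>U\<close>.
\<close>

lemma binary_row_sum_one_obtains_assignment:
  fixes U :: "'a::semiring_char_0 ^ 'k ^ 'n"
  assumes binary: "\<forall>i j. U $ i $ j = 0 \<or> U $ i $ j = 1"
    and rowsum: "\<forall>i. (\<Sum>j\<in>UNIV. U $ i $ j) = 1"
  obtains c where "\<And>i j. U $ i $ j = (if j = c i then 1 else 0)"
proof -
  have "\<exists>j0. {j. U $ i $ j = 1} = {j0}" for i
  proof -
    have "(1::'a) = (\<Sum>j\<in>UNIV. U $ i $ j)"
      using rowsum by simp
    also have "\<dots> = (\<Sum>j\<in>UNIV. if U $ i $ j = 1 then 1 else 0)"
      by (rule sum.cong) (use binary in auto)
    also have "\<dots> = of_nat (card {j. U $ i $ j = 1})"
      by (simp add: sum.If_cases)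
    finally have "card {j. U $ i $ j = 1} = 1"
      by (metis of_nat_eq_1_iff)
    then show ?thesis
      by (simp add: card_1_singleton_iff)
  qed
  then obtain c where c: "\<And>i. {j. U $ i $ j = 1} = {c i}"
    by (metis choice)
  have "U $ i $ j = (if j = c i then 1 else 0)" for i j
  proof -
    have "U $ i $ j = 1 \<longleftrightarrow> j = c i"
      using c[of i] by blast
    then show ?thesis
      using binary by auto
  qed
  then show ?thesis
    using that by blast
qed

lemma matrix_vector_mult_assignment:
  fixes U :: "'a::semiring_1 ^ 'k ^ 'n"
  assumes "\<And>i j. U $ i $ j = (if j = c i then 1 else 0)"
  shows "U *v w = (\<chi> i. w $ c i)"
  by (simp add: vec_eq_iff matrix_vector_mult_def assms if_distrib[of "\<lambda>a. a * _"] cong: if_cong)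

lemma map_vec_matrix_vector_mult_commute:
  fixes U :: "real ^ 'k ^ 'n"
  assumes "\<forall>i j. U $ i $ j = 0 \<or> U $ i $ j = 1"
    and "\<forall>i. (\<Sum>j\<in>UNIV. U $ i $ j) = 1"
  shows "map_vec \<sigma> (U *v w) = U *v map_vec \<sigma> w"
proof -
  obtain c where "\<And>i j. U $ i $ j = (if j = c i then 1 else 0)"
    using binary_row_sum_one_obtains_assignment assms by blast
  then show ?thesis
    by (simp add: matrix_vector_mult_assignment map_vec_def)
qed

lemma matrix_inv_right:
  fixes A :: "'a::semiring_1 ^ 'n ^ 'm"
  assumes "invertible A"
  shows "A ** matrix_inv A = mat 1"
  using assms unfolding matrix_inv_def invertible_def by (rule someI_ex[THEN conjunct1])

lemma transpose_projection_mult_self: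
  fixes U :: "'a::comm_semiring_1 ^ 'k ^ 'n"
  assumes "invertible (transpose U ** U)"
  shows "transpose (U ** matrix_inv (transpose U ** U) ** transpose U) ** U = U"
proof -
  let ?G = "transpose U ** U"
  let ?M = "matrix_inv ?G"
  have "transpose ?M ** ?G = transpose (transpose ?G ** ?M)"
    by (simp add: matrix_transpose_mul)
  also have "\<dots> = mat 1"
    by (simp add: matrix_transpose_mul matrix_inv_right[OF assms] transpose_mat)
  finally have "transpose ?M ** ?G = mat 1" .
  then have "U ** (transpose ?M ** ?G) = U"
    by simp
  then show ?thesis
    by (simp add: matrix_transpose_mul matrix_mul_assoc)
qed

theorem lemma2:
  fixes U :: "real ^ 'k ^ 'n" and \<sigma> :: "real \<Rightarrow> real" and x :: "real ^ 'n"
  assumes binary: "\<forall>i j. U $ i $ j = 0 \<or> U $ i $ j = 1"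
    and rowsum: "\<forall>i. (\<Sum>j\<in>UNIV. U $ i $ j) = 1"
    and inv: "invertible (transpose U ** U)"
  shows "map_vec \<sigma> ((U ** matrix_inv (transpose U ** U) ** transpose U) *v x)
       = transpose (U ** matrix_inv (transpose U ** U) ** transpose U)
           *v map_vec \<sigma> ((U ** matrix_inv (transpose U ** U) ** transpose U) *v x)"
proof -
  let ?C = "U ** matrix_inv (transpose U ** U) ** transpose U"
  define w where "w = (matrix_inv (transpose U ** U) ** transpose U) *v x"
  have "?C *v x = U *v w"
    unfolding w_def by (simp add: matrix_vector_mul_assoc matrix_mul_assoc)
  then have "map_vec \<sigma> (?C *v x) = U *v map_vec \<sigma> w"
    using map_vec_matrix_vector_mult_commute[OF binary rowsum] by simp
  moreover have "transpose ?C *v (U *v map_vec \<sigma> w) = U *v map_vec \<sigma> w"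
    by (simp add: matrix_vector_mul_assoc transpose_projection_mult_self[OF inv])
  ultimately show ?thesis
    by simp
qed

end
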